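(* There is $\delta_0>0$ such that the following holds for every fixed $\delta\in(0,\delta_0)$ and every fixed $\varepsilon\in(0,\delta^2/9)$. Let $N\to\infty$, put $k=(1+\delta)\log_2 N$, $n=(1/2+\delta)N$ (rounded to integers), and let $m=m(N)$ be an integer with $m=(1+o(1))\,\varepsilon(1+2\delta)^k N$. Let $f=\bigwedge_{i=1}^m C_i$ where $C_1,\dots,C_m$ are independent uniformly random $k$-clauses on $n$ variables. Then $$\Pr\big(\mu(f)>\exp[-n^{\delta}]\big)=o(2^{-N}).$$
   Context: $\mu$ is the uniform probability measure on $\{0,1\}^n$ and $\mu(f)=\mu(\{x:f(x)=1\})$. A uniformly random $k$-clause on $x_1,\dots,x_n$ is obtained by choosing a $k$-subset $K\subseteq[n]$ uniformly at random and a vector $g\in\{0,1\}^K$ uniformly at random; the clause is the Boolean function $C(x)=1$ iff $x_j=g_j$ for some $j\in K$. *)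

theory Defs
  imports "HOL-Probability.Probability" "HOL-Library.Landau_Symbols"
begin

text \<open>Assignments x in {0,1}^n: functions on the variable indices {..<n}
  (True = 1), extensional outside.\<close>
definition assignments :: "nat \<Rightarrow> (nat \<Rightarrow> bool) set" where
  "assignments n = {..<n} \<rightarrow>\<^sub>E (UNIV :: bool set)"

text \<open>A k-clause: a set K of k variables and a vector g in {0,1}^K.\<close>
type_synonym clause = "nat set \<times> (nat \<Rightarrow> bool)"

definition clause_val :: "clause \<Rightarrow> (nat \<Rightarrow> bool) \<Rightarrow> bool" where
  "clause_val C x = (\<exists>j\<in>fst C. x j = snd C j)"

definition random_clause :: "nat \<Rightarrow> nat \<Rightarrow> clause pmf" where
  "random_clause n k =
     pmf_of_set {K. K \<subseteq> {..<n} \<and> card K = k} \<bind>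
       (\<lambda>K. map_pmf (\<lambda>g. (K, g)) (pmf_of_set (K \<rightarrow>\<^sub>E (UNIV :: bool set))))"

definition random_formula :: "nat \<Rightarrow> nat \<Rightarrow> nat \<Rightarrow> (nat \<Rightarrow> clause) pmf" where
  "random_formula n k m = Pi_pmf {..<m} undefined (\<lambda>_. random_clause n k)"

definition mu_formula :: "nat \<Rightarrow> nat \<Rightarrow> (nat \<Rightarrow> clause) \<Rightarrow> real" where
  "mu_formula n m Cs =
     real (card {x \<in> assignments n. \<forall>i<m. clause_val (Cs i) x}) / 2 ^ n"

end

theory Submission
  imports Defs "HOL-Real_Asymp.Real_Asymp"
begin

text \<open>
  Let \<open>S\<^sub>i\<close> be the set of assignments satisfying the first \<open>i\<close> clauses. A random \<open>k\<close>-clause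
  falsifies on average a \<open>2\<^sup>-\<^sup>k\<close> fraction of \<open>S\<^sub>i\<close>. Two assignments agreeing in \<open>a\<close> coordinates
  are both falsified with probability at most \<open>(a/n)\<^sup>k 2\<^sup>-\<^sup>k\<close>, and by Hoeffding's inequality
  almost all pairs agree in at most \<open>(1/2 + \<gamma>) n\<close> coordinates. Hence, as long as \<open>S\<^sub>i\<close> is not
  tiny, the second moment of the number of falsified assignments is close to the squared mean,
  and by Chebyshev's inequality the clause fails to falsify half of its share only with
  probability \<open>\<le> 1/16\<close>. The clauses being independent, at least half of the \<open>m\<close> steps fail
  with probability \<open>\<le> (m choose m/2) 16\<^sup>-\<^sup>m\<^sup>/\<^sup>2 \<le> 2\<^sup>-\<^sup>m\<close>; otherwise
  \<open>|S\<^sub>m| \<le> 2\<^sup>n (1 - 2\<^sup>-\<^sup>k\<^sup>-\<^sup>1)\<^sup>m\<^sup>/\<^sup>2 \<le> 2\<^sup>n exp(-n\<^sup>\<delta>)\<close>. Finally \<open>m \<approx> \<epsilon> (1 + 2\<delta>)\<^sup>k N\<close>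
  exceeds both \<open>4 \<cdot> 2\<^sup>k n\<^sup>\<delta>\<close> and \<open>2N\<close> for large \<open>N\<close>.
\<close>

definition k_subsets :: "nat \<Rightarrow> nat \<Rightarrow> nat set set" where
  "k_subsets n k = {K. K \<subseteq> {..<n} \<and> card K = k}"

definition clauses :: "nat \<Rightarrow> nat \<Rightarrow> clause set" where
  "clauses n k = (SIGMA K:k_subsets n k. K \<rightarrow>\<^sub>E (UNIV :: bool set))"

lemma finite_k_subsets: "finite (k_subsets n k)"
  unfolding k_subsets_def by (rule finite_subset[of _ "Pow {..<n}"]) auto

lemma card_k_subsets: "card (k_subsets n k) = n choose k"
  unfolding k_subsets_def by (simp add: n_subsets)

lemma finite_clauses: "finite (clauses n k)"
  unfolding clauses_def k_subsets_def
  by (intro finite_SigmaI finite_k_subsets[unfolded k_subsets_def] finite_PiE)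
     (auto dest: finite_subset)

lemma card_clauses: "card (clauses n k) = (n choose k) * 2 ^ k"
proof -
  have "card (clauses n k) = (\<Sum>K\<in>k_subsets n k. card (K \<rightarrow>\<^sub>E (UNIV :: bool set)))"
    unfolding clauses_def k_subsets_def
    by (intro card_SigmaI finite_k_subsets[unfolded k_subsets_def] ballI finite_PiE)
       (auto dest: finite_subset)
  also have "\<dots> = (\<Sum>K\<in>k_subsets n k. 2 ^ k)"
    by (intro sum.cong refl) (auto simp: k_subsets_def card_PiE dest: finite_subset)
  finally show ?thesis
    by (simp add: card_k_subsets)
qed

lemma random_clause_eq_pmf_of_set:
  assumes "k \<le> n"
  shows "random_clause n k = pmf_of_set (clauses n k)"
proof -
  define G where "G K = (K \<rightarrow>\<^sub>E (UNIV :: bool set))" for K :: "nat set"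
  have G: "finite (G K)" "G K \<noteq> {}" if "K \<in> k_subsets n k" for K
    using that unfolding G_def k_subsets_def
    by (auto simp: PiE_eq_empty_iff intro!: finite_PiE dest: finite_subset)
  have "k_subsets n k \<noteq> {}"
    using assms card_k_subsets[of n k] by auto
  then have "random_clause n k = pmf_of_set (k_subsets n k) \<bind> (\<lambda>K. pmf_of_set (Pair K ` G K))"
    unfolding random_clause_def k_subsets_def[symmetric] G_def[symmetric]
    by (intro bind_pmf_cong refl map_pmf_of_set_inj)
       (auto simp: finite_k_subsets G inj_on_def)
  also have "\<dots> = pmf_of_set (\<Union>K\<in>k_subsets n k. Pair K ` G K)"
  proof (rule pmf_of_set_UN[symmetric, where n = "2 ^ k"])
    show "finite (\<Union>K\<in>k_subsets n k. Pair K ` G K)"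
      by (intro finite_UN_I finite_k_subsets finite_imageI G)
    show "card (Pair K ` G K) = 2 ^ k" if "K \<in> k_subsets n k" for K
      using that unfolding G_def k_subsets_def
      by (auto simp: card_image inj_on_def card_PiE dest: finite_subset)
  qed (use \<open>k_subsets n k \<noteq> {}\<close> G in \<open>auto simp: disjoint_family_on_def\<close>)
  also have "(\<Union>K\<in>k_subsets n k. Pair K ` G K) = clauses n k"
    unfolding clauses_def G_def by blast
  finally show ?thesis .
qed

section \<open>First and second moment of the number of falsified assignments\<close>

definition falsified :: "(nat \<Rightarrow> bool) set \<Rightarrow> clause \<Rightarrow> (nat \<Rightarrow> bool) set" where
  "falsified T C = {x \<in> T. \<not> clause_val C x}"

definition agreement :: "nat \<Rightarrow> (nat \<Rightarrow> bool) \<Rightarrow> (nat \<Rightarrow> bool) \<Rightarrow> nat set" where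
  "agreement n x y = {j \<in> {..<n}. x j = y j}"

text \<open>A clause falsified by \<open>x\<close> has sign vector \<open>\<not> x\<close> on its support, so it is determined
  by the support; it is falsified by \<open>y\<close> as well iff \<open>x\<close> and \<open>y\<close> agree on the support.\<close>

lemma card_clauses_falsified_by_both:
  "card {C \<in> clauses n k. \<not> clause_val C x \<and> \<not> clause_val C y} = card (agreement n x y) choose k"
proof -
  have "{C \<in> clauses n k. \<not> clause_val C x \<and> \<not> clause_val C y}
      = (\<lambda>K. (K, restrict (\<lambda>j. \<not> x j) K)) ` {K. K \<subseteq> agreement n x y \<and> card K = k}"
  proof (intro equalityI subsetI)
    fix C assume "C \<in> {C \<in> clauses n k. \<not> clause_val C x \<and> \<not> clause_val C y}"
    then obtain K g where C: "C = (K, g)" "K \<in> k_subsets n k" "g \<in> K \<rightarrow>\<^sub>E UNIV"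
        and "\<forall>j\<in>K. x j \<noteq> g j" "\<forall>j\<in>K. y j \<noteq> g j"
      by (auto simp: clauses_def clause_val_def)
    then have "g = restrict (\<lambda>j. \<not> x j) K" "K \<subseteq> agreement n x y"
      by (auto simp: fun_eq_iff PiE_def extensional_def k_subsets_def agreement_def)
    with C show "C \<in> (\<lambda>K. (K, restrict (\<lambda>j. \<not> x j) K)) ` {K. K \<subseteq> agreement n x y \<and> card K = k}"
      by (auto simp: k_subsets_def)
  qed (auto simp: clauses_def k_subsets_def agreement_def clause_val_def)
  then show ?thesis
    by (simp add: card_image inj_on_def n_subsets agreement_def)
qed

lemma card_clauses_falsified_by:
  "card {C \<in> clauses n k. \<not> clause_val C x} = n choose k"
  using card_clauses_falsified_by_both[of n k x x] by (simp add: agreement_def)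

lemma card_falsified_eq_sum:
  "finite T \<Longrightarrow> real (card (falsified T C)) = (\<Sum>x\<in>T. of_bool (\<not> clause_val C x))"
  by (simp add: falsified_def Int_def)

lemma sum_card_falsified:
  assumes "finite T"
  shows "(\<Sum>C\<in>clauses n k. real (card (falsified T C))) = real (card T) * (n choose k)"
proof -
  have "(\<Sum>C\<in>clauses n k. real (card (falsified T C)))
      = (\<Sum>x\<in>T. \<Sum>C\<in>clauses n k. of_bool (\<not> clause_val C x))"
    using assms by (simp add: card_falsified_eq_sum sum.swap[of _ "clauses n k"])
  also have "\<dots> = (\<Sum>x\<in>T. real (n choose k))"
    by (simp add: finite_clauses Int_def card_clauses_falsified_by)
  finally show ?thesis
    by simp
qed

lemma sum_card_falsified_squared:
  assumes "finite T"
  shows "(\<Sum>C\<in>clauses n k. real (card (falsified T C)) ^ 2)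
       = (\<Sum>x\<in>T. \<Sum>y\<in>T. real (card (agreement n x y) choose k))"
proof -
  have "(\<Sum>C\<in>clauses n k. real (card (falsified T C)) ^ 2)
      = (\<Sum>C\<in>clauses n k. \<Sum>x\<in>T. \<Sum>y\<in>T. of_bool (\<not> clause_val C x \<and> \<not> clause_val C y))"
    using assms by (simp only: card_falsified_eq_sum power2_eq_square sum_product of_bool_conj)
  also have "\<dots> = (\<Sum>x\<in>T. \<Sum>y\<in>T. \<Sum>C\<in>clauses n k. of_bool (\<not> clause_val C x \<and> \<not> clause_val C y))"
    by (simp add: sum.swap[of _ "clauses n k"])
  also have "\<dots> = (\<Sum>x\<in>T. \<Sum>y\<in>T. real (card (agreement n x y) choose k))"
    by (simp add: finite_clauses Int_def card_clauses_falsified_by_both)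
  finally show ?thesis .
qed

section \<open>Chebyshev's inequality for counting\<close>

lemma card_less_half_mean_le:
  fixes f :: "'a \<Rightarrow> real" and \<mu> \<eta> :: real
  assumes "finite S" "\<mu> > 0"
    and first_moment: "(\<Sum>s\<in>S. f s) = card S * \<mu>"
    and second_moment: "(\<Sum>s\<in>S. f s ^ 2) \<le> (1 + \<eta>) * card S * \<mu> ^ 2"
  shows "card {s \<in> S. f s < \<mu> / 2} \<le> 4 * \<eta> * card S"
proof -
  have "(\<Sum>s\<in>S. (f s - \<mu>) ^ 2) = (\<Sum>s\<in>S. f s ^ 2 - 2 * \<mu> * f s + \<mu> ^ 2)"
    by (intro sum.cong refl) (simp add: power2_diff algebra_simps)
  also have "\<dots> = (\<Sum>s\<in>S. f s ^ 2) - 2 * \<mu> * (\<Sum>s\<in>S. f s) + card S * \<mu> ^ 2"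
    by (simp add: sum.distrib sum_subtractf sum_distrib_left)
  also have "\<dots> \<le> \<eta> * card S * \<mu> ^ 2"
    using first_moment second_moment by (simp add: algebra_simps power2_eq_square)
  finally have variance: "(\<Sum>s\<in>S. (f s - \<mu>) ^ 2) \<le> \<eta> * card S * \<mu> ^ 2" .
  have "card {s \<in> S. f s < \<mu> / 2} * (\<mu> / 2) ^ 2 = (\<Sum>s\<in>{s \<in> S. f s < \<mu> / 2}. (\<mu> / 2) ^ 2)"
    by simp
  also have "\<dots> \<le> (\<Sum>s\<in>{s \<in> S. f s < \<mu> / 2}. (f s - \<mu>) ^ 2)"
  proof (rule sum_mono)
    fix s assume "s \<in> {s \<in> S. f s < \<mu> / 2}"
    then have "(\<mu> / 2) ^ 2 \<le> (\<mu> - f s) ^ 2"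
      using \<open>\<mu> > 0\<close> by (intro power_mono) auto
    then show "(\<mu> / 2) ^ 2 \<le> (f s - \<mu>) ^ 2"
      by (simp add: power2_commute)
  qed
  also have "\<dots> \<le> (\<Sum>s\<in>S. (f s - \<mu>) ^ 2)"
    using \<open>finite S\<close> by (intro sum_mono2) auto
  finally have "card {s \<in> S. f s < \<mu> / 2} * \<mu> ^ 2 \<le> (4 * \<eta> * card S) * \<mu> ^ 2"
    using variance by (simp add: power_divide)
  then show ?thesis
    using \<open>\<mu> > 0\<close> by simp
qed

section \<open>Pairs of assignments with large agreement are rare\<close>

lemma finite_assignments: "finite (assignments n)"
  unfolding assignments_def by (rule finite_PiE) auto

lemma card_assignments: "card (assignments n) = 2 ^ n"
  unfolding assignments_def by (simp add: card_PiE)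

lemma bij_betw_agreement:
  assumes "x \<in> assignments n"
  shows "bij_betw (agreement n x) (assignments n) (Pow {..<n})"
proof (rule bij_betwI[where g = "\<lambda>D j. if j < n then (if j \<in> D then x j else \<not> x j) else undefined"])
  show "(\<lambda>j. if j < n then (if j \<in> agreement n x y then x j else \<not> x j) else undefined) = y"
    if "y \<in> assignments n" for y
    using that by (auto simp: assignments_def agreement_def fun_eq_iff PiE_def extensional_def)
qed (auto simp: assignments_def agreement_def PiE_def extensional_def)

lemma binomial_pmf_half_eq_map_card_Pow:
  "binomial_pmf n (1/2) = map_pmf card (pmf_of_set (Pow {..<n}))"
proof -
  have "binomial_pmf n (1/2)
      = map_pmf (\<lambda>b. card {j \<in> {..<n}. b j}) (Pi_pmf {..<n} False (\<lambda>_. bernoulli_pmf (1/2)))"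
    by (rule binomial_pmf_altdef') auto
  also have "\<dots> = map_pmf card (map_pmf (\<lambda>b. {j \<in> {..<n}. b j}) (Pi_pmf {..<n} False (\<lambda>_. bernoulli_pmf (1/2))))"
    by (simp add: pmf.map_comp o_def)
  also have "map_pmf (\<lambda>b. {j \<in> {..<n}. b j}) (Pi_pmf {..<n} False (\<lambda>_. bernoulli_pmf (1/2)))
      = pmf_of_set (Pow {..<n})"
    by (rule pmf_of_set_Pow_conv_bernoulli) simp
  finally show ?thesis .
qed

text \<open>The agreement of a fixed and a uniform assignment is binomially distributed, so
  Hoeffding's inequality applies.\<close>

lemma card_close_assignments_le:
  fixes \<gamma> :: real
  assumes "x \<in> assignments n" "n > 0" "\<gamma> \<ge> 0"
  shows "real (card {y \<in> assignments n. (1/2 + \<gamma>) * n \<le> card (agreement n x y)})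
           \<le> 2 ^ n * exp (- 2 * real n * \<gamma> ^ 2)"
proof -
  let ?U = "pmf_of_set (assignments n)"
  have ne: "assignments n \<noteq> {}"
    using card_assignments[of n] by auto
  have "map_pmf card (map_pmf (agreement n x) ?U) = binomial_pmf n (1/2)"
    by (simp add: map_pmf_of_set_bij_betw[OF bij_betw_agreement[OF assms(1)] ne finite_assignments]
        binomial_pmf_half_eq_map_card_Pow)
  then have agreement_distr: "map_pmf (\<lambda>y. card (agreement n x y)) ?U = binomial_pmf n (1/2)"
    by (simp add: pmf.map_comp o_def)
  have "real (card {y \<in> assignments n. (1/2 + \<gamma>) * n \<le> card (agreement n x y)}) / 2 ^ n
      = measure_pmf.prob ?U {y. 1/2 + \<gamma> \<le> card (agreement n x y) / n}"
    using assms(2) by (simp add: measure_pmf_of_set ne finite_assignments card_assignments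
        Int_def field_simps)
  also have "\<dots> = measure_pmf.prob (binomial_pmf n (1/2)) {j. 1/2 + \<gamma> \<le> j / n}"
    by (simp flip: agreement_distr)
  also have "\<dots> \<le> exp (- 2 * real n * \<gamma> ^ 2)"
    using binomial_distribution.prob_ge'[of "1/2" n \<gamma>] assms(2,3)
    by (simp add: binomial_distribution_def)
  finally show ?thesis
    by (simp add: field_simps)
qed

lemma binomial_mult_power_le:
  "a \<le> n \<Longrightarrow> (a choose k) * n ^ k \<le> (n choose k) * a ^ k"
proof (induction k)
  case (Suc k)
  have key: "(a - k) * n \<le> (n - k) * a"
  proof -
    have "(a - k) * n = a * n - k * n" "(n - k) * a = n * a - k * a"
      by (simp_all only: diff_mult_distrib)
    moreover have "k * a \<le> k * n"
      using Suc.prems by simp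
    ultimately show ?thesis
      by (metis diff_le_mono2 mult.commute)
  qed
  have a: "Suc k * (a choose Suc k) = (a - k) * (a choose k)"
    and n: "Suc k * (n choose Suc k) = (n - k) * (n choose k)"
    using binomial_absorb_comp binomial_absorption by metis+
  have "Suc k * ((a choose Suc k) * n ^ Suc k) = (Suc k * (a choose Suc k)) * (n ^ k * n)"
    by (simp only: mult_ac power_Suc)
  also have "\<dots> = ((a choose k) * n ^ k) * ((a - k) * n)"
    by (simp only: a mult_ac)
  also have "\<dots> \<le> ((n choose k) * a ^ k) * ((n - k) * a)"
    by (rule mult_le_mono[OF Suc.IH[OF Suc.prems] key])
  also have "\<dots> = (Suc k * (n choose Suc k)) * (a ^ k * a)"
    by (simp only: n mult_ac)
  also have "\<dots> = Suc k * ((n choose Suc k) * a ^ Suc k)"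
    by (simp only: mult_ac power_Suc)
  finally show ?case
    by (simp only: mult_le_cancel1)
qed simp

lemma binomial_le_ratio_power:
  assumes "a \<le> n" "n > 0"
  shows "real (a choose k) \<le> real (n choose k) * (a / n) ^ k"
proof -
  have "real (a choose k) * n ^ k \<le> real (n choose k) * a ^ k"
    using binomial_mult_power_le[OF assms(1), of k] by (metis of_nat_le_iff of_nat_mult of_nat_power)
  then show ?thesis
    using assms by (simp add: power_divide field_simps)
qed

lemma agreement_choose_le:
  fixes \<gamma> \<eta> :: real
  assumes "n > 0" "\<eta> \<ge> 0"
    and far_weight: "(1/2 + \<gamma>) ^ k \<le> (1 + \<eta> / 2) / 2 ^ k"
  shows "real (card (agreement n x y) choose k)
           \<le> (n choose k) * (1 + \<eta> / 2) / 2 ^ k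
              + (if (1/2 + \<gamma>) * n \<le> card (agreement n x y) then real (n choose k) else 0)"
proof -
  have a: "card (agreement n x y) \<le> n"
    using card_mono[of "{..<n}" "agreement n x y"] by (auto simp: agreement_def)
  show ?thesis
  proof (cases "(1/2 + \<gamma>) * n \<le> card (agreement n x y)")
    case True
    have "real (card (agreement n x y) choose k) \<le> n choose k"
      using binomial_right_mono[OF a, of k] by simp
    moreover have "0 \<le> (n choose k) * (1 + \<eta> / 2) / 2 ^ k"
      using assms(2) by simp
    ultimately show ?thesis
      using True by simp
  next
    case False
    have "real (card (agreement n x y) choose k) \<le> (n choose k) * (card (agreement n x y) / n) ^ k"
      by (rule binomial_le_ratio_power[OF a assms(1)])
    also have "\<dots> \<le> (n choose k) * (1/2 + \<gamma>) ^ k"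
      using False assms(1) by (intro mult_left_mono power_mono) (auto simp: field_simps)
    also have "\<dots> \<le> (n choose k) * (1 + \<eta> / 2) / 2 ^ k"
      using mult_left_mono[OF far_weight, of "real (n choose k)"] by simp
    finally show ?thesis
      using False by simp
  qed
qed

lemma sum_agreement_choose_le:
  fixes \<gamma> \<eta> :: real
  assumes "n > 0" "T \<subseteq> assignments n" "\<gamma> \<ge> 0" "\<eta> \<ge> 0"
    and far_weight: "(1/2 + \<gamma>) ^ k \<le> (1 + \<eta> / 2) / 2 ^ k"
    and few_close: "2 ^ n * exp (- 2 * real n * \<gamma> ^ 2) \<le> \<eta> / 2 * card T / 2 ^ k"
  shows "(\<Sum>x\<in>T. \<Sum>y\<in>T. real (card (agreement n x y) choose k))
           \<le> (1 + \<eta>) * card T ^ 2 * (n choose k) / 2 ^ k"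
proof -
  define B where "B = real (n choose k)"
  define close where "close x y \<longleftrightarrow> (1/2 + \<gamma>) * n \<le> card (agreement n x y)" for x y
  have "finite T"
    using assms(2) finite_assignments finite_subset by blast
  have row: "(\<Sum>y\<in>T. real (card (agreement n x y) choose k)) \<le> (1 + \<eta>) * card T * B / 2 ^ k"
    if "x \<in> T" for x
  proof -
    have "real (card {y \<in> T. close x y}) \<le> card {y \<in> assignments n. close x y}"
      using assms(2) by (intro of_nat_mono card_mono) (auto simp: finite_assignments)
    also have "\<dots> \<le> \<eta> / 2 * card T / 2 ^ k"
      using card_close_assignments_le[of x n \<gamma>] that assms few_close by (auto simp: close_def)
    finally have close_count: "real (card {y \<in> T. close x y}) \<le> \<eta> / 2 * card T / 2 ^ k" .
    have "(\<Sum>y\<in>T. real (card (agreement n x y) choose k))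
        \<le> (\<Sum>y\<in>T. B * (1 + \<eta> / 2) / 2 ^ k + (if close x y then B else 0))"
      unfolding B_def close_def by (intro sum_mono agreement_choose_le[OF assms(1,4) far_weight])
    also have "\<dots> = card T * (B * (1 + \<eta> / 2) / 2 ^ k) + B * card {y \<in> T. close x y}"
      using \<open>finite T\<close> by (simp add: sum.distrib sum.If_cases Int_def)
    also have "\<dots> \<le> card T * (B * (1 + \<eta> / 2) / 2 ^ k) + B * (\<eta> / 2 * card T / 2 ^ k)"
      using close_count by (intro add_left_mono mult_left_mono) (simp_all add: B_def)
    also have "\<dots> = (1 + \<eta>) * card T * B / 2 ^ k"
      by (simp add: field_simps)
    finally show ?thesis .
  qed
  have "(\<Sum>x\<in>T. \<Sum>y\<in>T. real (card (agreement n x y) choose k)) \<le> (\<Sum>x\<in>T. (1 + \<eta>) * card T * B / 2 ^ k)"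
    by (intro sum_mono row)
  then show ?thesis
    by (simp add: B_def power2_eq_square mult_ac)
qed

lemma prob_falsified_less_half_mean_le:
  fixes \<gamma> \<eta> :: real
  assumes "k \<le> n" "n > 0" "T \<subseteq> assignments n" "\<gamma> \<ge> 0" "\<eta> \<ge> 0"
    and far_weight: "(1/2 + \<gamma>) ^ k \<le> (1 + \<eta> / 2) / 2 ^ k"
    and few_close: "2 ^ n * exp (- 2 * real n * \<gamma> ^ 2) \<le> \<eta> / 2 * card T / 2 ^ k"
  shows "measure_pmf.prob (random_clause n k) {C. card (falsified T C) < card T / 2 ^ k / 2} \<le> 4 * \<eta>"
proof -
  have "finite T"
    using assms(3) finite_assignments finite_subset by blast
  have "card T > 0"
  proof (rule ccontr)
    assume "\<not> card T > 0"
    with few_close have "2 ^ n * exp (- 2 * real n * \<gamma> ^ 2) \<le> 0"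
      by simp
    then show False
      by (smt (verit) exp_gt_zero mult_pos_pos zero_less_power)
  qed
  have ne: "clauses n k \<noteq> {}"
    using assms(1) card_clauses[of n k] by auto
  have "card {C \<in> clauses n k. card (falsified T C) < card T / 2 ^ k / 2} \<le> 4 * \<eta> * card (clauses n k)"
  proof (rule card_less_half_mean_le)
    show "(\<Sum>C\<in>clauses n k. real (card (falsified T C))) = card (clauses n k) * (card T / 2 ^ k)"
      by (simp add: sum_card_falsified[OF \<open>finite T\<close>] card_clauses)
    show "(\<Sum>C\<in>clauses n k. real (card (falsified T C)) ^ 2)
        \<le> (1 + \<eta>) * card (clauses n k) * (card T / 2 ^ k) ^ 2"
    proof -
      have "(1 + \<eta>) * card (clauses n k) * (card T / 2 ^ k) ^ 2 = (1 + \<eta>) * card T ^ 2 * (n choose k) / 2 ^ k"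
        by (simp add: card_clauses power2_eq_square field_simps)
      then show ?thesis
        using sum_agreement_choose_le[OF assms(2-7)]
        by (simp add: sum_card_falsified_squared[OF \<open>finite T\<close>])
    qed
  qed (use \<open>card T > 0\<close> in \<open>simp_all add: finite_clauses\<close>)
  then show ?thesis
    using ne finite_clauses[of n k]
    by (simp add: random_clause_eq_pmf_of_set[OF assms(1)] measure_pmf_of_set Int_def
        card_gt_0_iff divide_le_eq)
qed

section \<open>Independent steps\<close>

lemma Pi_pmf_lessThan_Suc:
  "Pi_pmf {..<Suc m} d (\<lambda>_. Q) = Pi_pmf {..<m} d (\<lambda>_. Q) \<bind> (\<lambda>f. map_pmf (\<lambda>c. f(m := c)) Q)"
proof -
  have "Pi_pmf {..<Suc m} d (\<lambda>_. Q) = do {c \<leftarrow> Q; f \<leftarrow> Pi_pmf {..<m} d (\<lambda>_. Q); return_pmf (f(m := c))}"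
    unfolding lessThan_Suc by (rule Pi_pmf_insert') auto
  also have "\<dots> = do {f \<leftarrow> Pi_pmf {..<m} d (\<lambda>_. Q); c \<leftarrow> Q; return_pmf (f(m := c))}"
    by (rule bind_commute_pmf)
  finally show ?thesis
    by (simp add: map_pmf_def)
qed

lemma prob_bind_pmf_le:
  assumes "c \<ge> 0" "\<And>x. measure_pmf.prob (K x) E \<le> c * indicator E' x"
  shows "measure_pmf.prob (M \<bind> K) E \<le> c * measure_pmf.prob M E'"
proof -
  have "ennreal (measure_pmf.prob (M \<bind> K) E) = (\<integral>\<^sup>+x. ennreal (measure_pmf.prob (K x) E) \<partial>M)"
    by (simp add: measure_pmf.emeasure_eq_measure[symmetric])
  also have "\<dots> \<le> (\<integral>\<^sup>+x. ennreal c * indicator E' x \<partial>M)"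
  proof (rule nn_integral_mono)
    fix x
    show "ennreal (measure_pmf.prob (K x) E) \<le> ennreal c * indicator E' x"
      using assms(2)[of x] measure_nonneg[of "measure_pmf (K x)" E]
      by (cases "x \<in> E'") (simp_all add: ennreal_leI)
  qed
  also have "\<dots> = ennreal c * emeasure M E'"
    by (rule nn_integral_cmult_indicator) simp
  also have "\<dots> = ennreal (c * measure_pmf.prob M E')"
    using assms(1) by (simp add: measure_pmf.emeasure_eq_measure ennreal_mult)
  finally show ?thesis
    using assms(1) by (simp add: ennreal_le_iff)
qed

lemma prob_fun_upd_adapted_le:
  fixes Q :: "'a pmf" and \<theta> :: real and P :: "nat \<Rightarrow> (nat \<Rightarrow> 'a) \<Rightarrow> bool"
  assumes adapted: "\<And>i f g. (\<And>j. j \<le> i \<Longrightarrow> f j = g j) \<Longrightarrow> P i f = P i g"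
    and step: "\<And>i f. measure_pmf.prob Q {c. P i (f(i := c))} \<le> \<theta>"
    and "B \<subseteq> {..<Suc m}"
  shows "measure_pmf.prob (map_pmf (\<lambda>c. f(m := c)) Q) {f. \<forall>i\<in>B. P i f}
           \<le> (if m \<in> B then \<theta> else 1) * indicator {f. \<forall>i\<in>B - {m}. P i f} f"
proof (cases "\<forall>i\<in>B - {m}. P i f")
  case True
  have "measure_pmf.prob (map_pmf (\<lambda>c. f(m := c)) Q) {f. \<forall>i\<in>B. P i f}
      \<le> measure_pmf.prob Q {c. m \<in> B \<longrightarrow> P m (f(m := c))}"
    unfolding measure_map_pmf by (intro measure_pmf.finite_measure_mono) auto
  also have "\<dots> \<le> (if m \<in> B then \<theta> else 1)"
    using step[of m f] by simp
  finally show ?thesis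
    using True by simp
next
  case False
  then obtain i where "i \<in> B - {m}" "\<not> P i f"
    by blast
  moreover have "P i (f(m := c)) = P i f" for c
    using \<open>i \<in> B - {m}\<close> assms(3) by (intro adapted) auto
  ultimately have no_extension: "{c. \<forall>i\<in>B. P i (f(m := c))} = {}"
    by auto
  have "measure_pmf.prob (map_pmf (\<lambda>c. f(m := c)) Q) {f. \<forall>i\<in>B. P i f}
      = measure_pmf.prob Q {c. \<forall>i\<in>B. P i (f(m := c))}"
    by (simp add: vimage_def)
  then show ?thesis
    using False by (simp only: no_extension) simp
qed

lemma prob_Pi_pmf_adapted_all_le:
  fixes Q :: "'a pmf" and \<theta> :: real and P :: "nat \<Rightarrow> (nat \<Rightarrow> 'a) \<Rightarrow> bool"
  assumes adapted: "\<And>i f g. (\<And>j. j \<le> i \<Longrightarrow> f j = g j) \<Longrightarrow> P i f = P i g"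
    and step: "\<And>i f. measure_pmf.prob Q {c. P i (f(i := c))} \<le> \<theta>"
  shows "B \<subseteq> {..<m} \<Longrightarrow> measure_pmf.prob (Pi_pmf {..<m} d (\<lambda>_. Q)) {f. \<forall>i\<in>B. P i f} \<le> \<theta> ^ card B"
proof (induction m arbitrary: B)
  case 0
  then show ?case
    by simp
next
  case (Suc m)
  define c where "c = (if m \<in> B then \<theta> else 1)"
  have "\<theta> \<ge> 0"
    using step[of 0 undefined] measure_nonneg order_trans by blast
  then have "measure_pmf.prob (Pi_pmf {..<Suc m} d (\<lambda>_. Q)) {f. \<forall>i\<in>B. P i f}
      \<le> c * measure_pmf.prob (Pi_pmf {..<m} d (\<lambda>_. Q)) {f. \<forall>i\<in>B - {m}. P i f}"
    unfolding Pi_pmf_lessThan_Suc c_def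
    by (intro prob_bind_pmf_le prob_fun_upd_adapted_le[OF adapted step Suc.prems]) simp
  also have "\<dots> \<le> c * \<theta> ^ card (B - {m})"
    using \<open>\<theta> \<ge> 0\<close> Suc.prems by (intro mult_left_mono Suc.IH) (auto simp: c_def)
  also have "c * \<theta> ^ card (B - {m}) = \<theta> ^ card B"
  proof (cases "m \<in> B")
    case True
    then have "card B = Suc (card (B - {m}))"
      using card_Suc_Diff1[OF finite_subset[OF Suc.prems] True] by simp
    then show ?thesis
      using True by (metis c_def power_Suc)
  qed (simp add: c_def)
  finally show ?case .
qed

lemma prob_Pi_pmf_adapted_many_le:
  fixes Q :: "'a pmf" and \<theta> :: real and P :: "nat \<Rightarrow> (nat \<Rightarrow> 'a) \<Rightarrow> bool"
  assumes adapted: "\<And>i f g. (\<And>j. j \<le> i \<Longrightarrow> f j = g j) \<Longrightarrow> P i f = P i g"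
    and step: "\<And>i f. measure_pmf.prob Q {c. P i (f(i := c))} \<le> \<theta>"
  shows "measure_pmf.prob (Pi_pmf {..<m} d (\<lambda>_. Q)) {f. h \<le> card {i \<in> {..<m}. P i f}}
           \<le> (m choose h) * \<theta> ^ h"
proof -
  define Bs where "Bs = {B. B \<subseteq> {..<m} \<and> card B = h}"
  have "finite Bs"
    unfolding Bs_def by (rule finite_subset[of _ "Pow {..<m}"]) auto
  have "{f. h \<le> card {i \<in> {..<m}. P i f}} \<subseteq> (\<Union>B\<in>Bs. {f. \<forall>i\<in>B. P i f})"
  proof
    fix f assume "f \<in> {f. h \<le> card {i \<in> {..<m}. P i f}}"
    then obtain B where "B \<subseteq> {i \<in> {..<m}. P i f}" "card B = h"
      by (auto elim: obtain_subset_with_card_n)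
    then show "f \<in> (\<Union>B\<in>Bs. {f. \<forall>i\<in>B. P i f})"
      by (auto simp: Bs_def)
  qed
  then have "measure_pmf.prob (Pi_pmf {..<m} d (\<lambda>_. Q)) {f. h \<le> card {i \<in> {..<m}. P i f}}
      \<le> measure_pmf.prob (Pi_pmf {..<m} d (\<lambda>_. Q)) (\<Union>B\<in>Bs. {f. \<forall>i\<in>B. P i f})"
    by (intro measure_pmf.finite_measure_mono) auto
  also have "\<dots> \<le> (\<Sum>B\<in>Bs. measure_pmf.prob (Pi_pmf {..<m} d (\<lambda>_. Q)) {f. \<forall>i\<in>B. P i f})"
    using \<open>finite Bs\<close> by (intro measure_pmf.finite_measure_subadditive_finite) auto
  also have "\<dots> \<le> (\<Sum>B\<in>Bs. \<theta> ^ h)"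
    using prob_Pi_pmf_adapted_all_le[OF adapted step] by (intro sum_mono) (auto simp: Bs_def)
  also have "\<dots> = (m choose h) * \<theta> ^ h"
    by (simp add: Bs_def n_subsets)
  finally show ?thesis .
qed

section \<open>Shrinking of the set of satisfying assignments\<close>

definition surviving :: "nat \<Rightarrow> nat \<Rightarrow> (nat \<Rightarrow> clause) \<Rightarrow> (nat \<Rightarrow> bool) set" where
  "surviving n i Cs = {x \<in> assignments n. \<forall>j<i. clause_val (Cs j) x}"

definition weak_step :: "nat \<Rightarrow> nat \<Rightarrow> real \<Rightarrow> nat \<Rightarrow> (nat \<Rightarrow> clause) \<Rightarrow> bool" where
  "weak_step n k A i Cs \<longleftrightarrow> A \<le> real (card (surviving n i Cs)) \<and>
     card (falsified (surviving n i Cs) (Cs i)) < card (surviving n i Cs) / 2 ^ k / 2"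

lemma mu_formula_eq_card_surviving: "mu_formula n m Cs = card (surviving n m Cs) / 2 ^ n"
  by (simp add: mu_formula_def surviving_def)

lemma surviving_cong: "(\<And>j. j < i \<Longrightarrow> Cs j = Cs' j) \<Longrightarrow> surviving n i Cs = surviving n i Cs'"
  by (simp add: surviving_def)

lemma weak_step_cong: "(\<And>j. j \<le> i \<Longrightarrow> Cs j = Cs' j) \<Longrightarrow> weak_step n k A i Cs = weak_step n k A i Cs'"
  using surviving_cong[of i Cs Cs' n] by (simp add: weak_step_def)

lemma surviving_antimono: "i \<le> j \<Longrightarrow> surviving n j Cs \<subseteq> surviving n i Cs"
  by (auto simp: surviving_def)

lemma card_surviving_Suc:
  "real (card (surviving n (Suc i) Cs))
     = real (card (surviving n i Cs)) - real (card (falsified (surviving n i Cs) (Cs i)))"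
proof -
  have "surviving n (Suc i) Cs = surviving n i Cs - falsified (surviving n i Cs) (Cs i)"
    by (auto simp: surviving_def falsified_def less_Suc_eq)
  moreover have "falsified (surviving n i Cs) (Cs i) \<subseteq> surviving n i Cs"
    by (auto simp: falsified_def)
  moreover have "finite (surviving n i Cs)"
    by (simp add: surviving_def finite_assignments)
  ultimately show ?thesis
    by (simp add: card_Diff_subset of_nat_diff card_mono finite_subset)
qed

lemma card_surviving_le:
  fixes q :: real
  assumes "0 \<le> q" "q \<le> 1"
  shows "real (card (surviving n i Cs))
           \<le> 2 ^ n * (1 - q) ^ card {j. j < i \<and> q * card (surviving n j Cs) \<le> card (falsified (surviving n j Cs) (Cs j))}"
proof (induction i)
  case 0
  have "card (surviving n 0 Cs) \<le> card (assignments n)"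
    by (simp add: surviving_def)
  then show ?case
    by (simp add: card_assignments)
next
  case (Suc i)
  define good where "good j \<longleftrightarrow> q * card (surviving n j Cs) \<le> card (falsified (surviving n j Cs) (Cs j))" for j
  have IH: "real (card (surviving n i Cs)) \<le> 2 ^ n * (1 - q) ^ card {j. j < i \<and> good j}"
    using Suc.IH by (simp add: good_def)
  show ?case
  proof (cases "good i")
    case True
    then have "{j. j < Suc i \<and> good j} = insert i {j. j < i \<and> good j}"
      by (auto simp: less_Suc_eq)
    have "real (card (surviving n (Suc i) Cs)) \<le> (1 - q) * card (surviving n i Cs)"
      using True by (simp add: card_surviving_Suc good_def algebra_simps)
    also have "\<dots> \<le> (1 - q) * (2 ^ n * (1 - q) ^ card {j. j < i \<and> good j})"
      using IH assms by (intro mult_left_mono) auto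
    also have "\<dots> = 2 ^ n * (1 - q) ^ card {j. j < Suc i \<and> good j}"
      using \<open>{j. j < Suc i \<and> good j} = insert i {j. j < i \<and> good j}\<close> by (simp add: mult_ac)
    finally show ?thesis
      by (simp add: good_def)
  next
    case False
    then have "{j. j < Suc i \<and> good j} = {j. j < i \<and> good j}"
      by (auto simp: less_Suc_eq)
    moreover have "real (card (surviving n (Suc i) Cs)) \<le> card (surviving n i Cs)"
      by (simp add: card_surviving_Suc)
    ultimately show ?thesis
      using IH by (simp add: good_def)
  qed
qed

text \<open>Every step that is not weak shrinks the surviving set by a factor \<open>1 - 2\<^sup>-\<^sup>k\<^sup>-\<^sup>1\<close>.\<close>

lemma many_weak_steps:
  fixes A :: real
  assumes "A < card (surviving n m Cs)" "2 ^ n * (1 - 1 / 2 ^ k / 2) ^ (m div 2 + 1) \<le> A"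
  shows "m - m div 2 \<le> card {i \<in> {..<m}. weak_step n k A i Cs}"
proof -
  define q :: real where "q = 1 / 2 ^ k / 2"
  define W where "W = {i \<in> {..<m}. weak_step n k A i Cs}"
  have q: "0 \<le> q" "q \<le> 1"
  proof -
    have "(1::real) \<le> 2 ^ k"
      by simp
    then have "1 \<le> (2::real) ^ k * 2"
      by linarith
    then show "0 \<le> q" "q \<le> 1"
      by (simp_all add: q_def)
  qed
  have large: "A \<le> card (surviving n j Cs)" if "j \<le> m" for j
  proof -
    have "card (surviving n m Cs) \<le> card (surviving n j Cs)"
      by (intro card_mono surviving_antimono[OF that]) (simp add: surviving_def finite_assignments)
    then show ?thesis
      using assms(1) by linarith
  qed
  have "\<not> m div 2 + 1 \<le> card ({..<m} - W)"
  proof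
    assume many_strong: "m div 2 + 1 \<le> card ({..<m} - W)"
    have "{j. j < m \<and> q * card (surviving n j Cs) \<le> card (falsified (surviving n j Cs) (Cs j))} = {..<m} - W"
      using large by (auto simp: W_def weak_step_def q_def not_less)
    then have "real (card (surviving n m Cs)) \<le> 2 ^ n * (1 - q) ^ card ({..<m} - W)"
      using card_surviving_le[OF q, of n m Cs] by simp
    also have "\<dots> \<le> 2 ^ n * (1 - q) ^ (m div 2 + 1)"
      using q many_strong by (intro mult_left_mono power_decreasing) auto
    also have "\<dots> \<le> A"
      using assms(2) by (simp add: q_def)
    finally show False
      using assms(1) by simp
  qed
  moreover have "card ({..<m} - W) = m - card W"
    by (subst card_Diff_subset) (auto simp: W_def)
  ultimately show ?thesis
    by (simp add: W_def)
qed

lemma prob_weak_step_le: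
  fixes \<gamma> A :: real
  assumes "k \<le> n" "n > 0" "\<gamma> \<ge> 0"
    and far_weight: "(1/2 + \<gamma>) ^ k \<le> (1 + 1/128) / 2 ^ k"
    and few_close: "2 ^ n * exp (- 2 * real n * \<gamma> ^ 2) \<le> A / 128 / 2 ^ k"
  shows "measure_pmf.prob (random_clause n k) {C. weak_step n k A i (Cs(i := C))} \<le> 1/16"
proof (cases "A \<le> card (surviving n i Cs)")
  case True
  have "surviving n i (Cs(i := C)) = surviving n i Cs" for C
    by (rule surviving_cong) simp
  then have "{C. weak_step n k A i (Cs(i := C))}
      = {C. card (falsified (surviving n i Cs) C) < card (surviving n i Cs) / 2 ^ k / 2}"
    using True by (simp add: weak_step_def)
  moreover have "2 ^ n * exp (- 2 * real n * \<gamma> ^ 2) \<le> (1/64) / 2 * card (surviving n i Cs) / 2 ^ k"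
    using few_close divide_right_mono[OF True, of "128 * 2 ^ k"] by simp
  ultimately show ?thesis
    using prob_falsified_less_half_mean_le[of k n "surviving n i Cs" \<gamma> "1/64"] assms(1-4)
    by (simp add: surviving_def)
next
  case False
  have "surviving n i (Cs(i := C)) = surviving n i Cs" for C
    by (rule surviving_cong) simp
  with False show ?thesis
    by (simp add: weak_step_def)
qed

lemma prob_mu_formula_gt_le:
  fixes \<gamma> A :: real
  assumes "k \<le> n" "n > 0" "\<gamma> \<ge> 0"
    and far_weight: "(1/2 + \<gamma>) ^ k \<le> (1 + 1/128) / 2 ^ k"
    and few_close: "2 ^ n * exp (- 2 * real n * \<gamma> ^ 2) \<le> A / 128 / 2 ^ k"
    and shrinking: "2 ^ n * (1 - 1 / 2 ^ k / 2) ^ (m div 2 + 1) \<le> A"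
  shows "measure_pmf.prob (random_formula n k m) {Cs. A / 2 ^ n < mu_formula n m Cs} \<le> (1/2) ^ m"
proof -
  define h where "h = m - m div 2"
  have "{Cs. A / 2 ^ n < mu_formula n m Cs} \<subseteq> {Cs. h \<le> card {i \<in> {..<m}. weak_step n k A i Cs}}"
    using many_weak_steps[OF _ shrinking]
    by (auto simp: h_def mu_formula_eq_card_surviving divide_less_cancel)
  then have "measure_pmf.prob (random_formula n k m) {Cs. A / 2 ^ n < mu_formula n m Cs}
      \<le> measure_pmf.prob (random_formula n k m) {Cs. h \<le> card {i \<in> {..<m}. weak_step n k A i Cs}}"
    by (intro measure_pmf.finite_measure_mono) auto
  also have "\<dots> \<le> (m choose h) * (1/16) ^ h"
    unfolding random_formula_def
    by (rule prob_Pi_pmf_adapted_many_le[OF weak_step_cong prob_weak_step_le[OF assms(1-5)]])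
  also have "\<dots> \<le> 2 ^ m * (1/4) ^ m"
  proof (rule mult_mono)
    show "real (m choose h) \<le> 2 ^ m"
      using binomial_le_pow2[of m h] by (metis of_nat_le_iff of_nat_numeral of_nat_power)
    have "(1/16 :: real) ^ h = (1/4) ^ (2 * h)"
      by (simp add: power_mult power2_eq_square)
    also have "\<dots> \<le> (1/4) ^ m"
      by (rule power_decreasing) (auto simp: h_def)
    finally show "(1/16 :: real) ^ h \<le> (1/4) ^ m" .
  qed auto
  also have "\<dots> = (1/2) ^ m"
    by (simp flip: power_mult_distrib)
  finally show ?thesis .
qed

lemma exp_one_two_hundredth_le: "exp (1/200 :: real) \<le> 1 + 1/128"
proof -
  have "exp (1/200 :: real) * (1 - 1/200) \<le> exp (1/200) * exp (- (1/200))"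
    using exp_ge_add_one_self[of "- (1/200 :: real)"] by (intro mult_left_mono) auto
  then have "exp (1/200 :: real) \<le> 1 / (1 - 1/200)"
    by (simp add: exp_minus field_simps)
  also have "\<dots> \<le> 1 + 1/128"
    by simp
  finally show ?thesis .
qed

lemma half_plus_power_le:
  assumes "k \<ge> 1"
  shows "(1/2 + 1 / (400 * real k)) ^ k \<le> (1 + 1/128) / 2 ^ k"
proof -
  have "1/2 + 1 / (400 * real k) = (1 + (1/200) / real k) / 2"
    by (simp add: field_simps)
  then have "(1/2 + 1 / (400 * real k)) ^ k = (1 + (1/200) / real k) ^ k / 2 ^ k"
    by (simp only: power_divide)
  also have "\<dots> \<le> exp (1/200) / 2 ^ k"
    using assms by (intro divide_right_mono exp_ge_one_plus_x_over_n_power_n) auto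
  also have "\<dots> \<le> (1 + 1/128) / 2 ^ k"
    by (intro divide_right_mono exp_one_two_hundredth_le) simp
  finally show ?thesis .
qed

lemma power_two_le_exp: "(2::real) ^ j \<le> exp (real j)"
proof -
  have "(2::real) ^ j \<le> exp 1 ^ j"
    using exp_ge_add_one_self[of 1] by (intro power_mono) auto
  then show ?thesis
    by (simp add: exp_of_nat_mult[symmetric])
qed

theorem prob_mu_formula_gt_exp_le:
  fixes s :: real
  assumes "1 \<le> k" "k \<le> n"
    and s_small: "s + 7 + k \<le> n / (80000 * real k ^ 2)"
    and m_large: "4 * 2 ^ k * s \<le> m"
  shows "measure_pmf.prob (random_formula n k m) {Cs. exp (- s) < mu_formula n m Cs} \<le> (1/2) ^ m"
proof -
  define \<gamma> :: real where "\<gamma> = 1 / (400 * k)"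
  define A where "A = 2 ^ n * exp (- s)"
  have few_close: "2 ^ n * exp (- 2 * real n * \<gamma> ^ 2) \<le> A / 128 / 2 ^ k"
  proof -
    have "- 2 * real n * \<gamma> ^ 2 \<le> - s - real (7 + k)"
      using s_small by (simp add: \<gamma>_def power2_eq_square)
    then have "exp (- 2 * real n * \<gamma> ^ 2) \<le> exp (- s) / exp (real (7 + k))"
      by (simp add: exp_diff[symmetric])
    also have "\<dots> \<le> exp (- s) / 2 ^ (7 + k)"
      by (intro divide_left_mono power_two_le_exp) auto
    finally show ?thesis
      by (simp add: A_def power_add field_simps)
  qed
  have shrinking: "2 ^ n * (1 - 1 / 2 ^ k / 2) ^ (m div 2 + 1) \<le> A"
  proof -
    define q :: real where "q = 1 / 2 ^ k / 2"
    have "(1::real) \<le> 2 ^ k"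
      by simp
    then have "1 \<le> (2::real) ^ k * 2"
      by linarith
    then have "q \<le> 1"
      by (simp add: q_def)
    then have "(1 - q) ^ (m div 2 + 1) \<le> exp (- q) ^ (m div 2 + 1)"
      using exp_ge_add_one_self[of "- q"] by (intro power_mono) auto
    also have "\<dots> = exp (- (q * (m div 2 + 1)))"
      by (subst exp_of_nat_mult[symmetric]) (simp add: mult.commute)
    also have "\<dots> \<le> exp (- s)"
    proof -
      have "s \<le> q * (m / 2)"
        using m_large by (simp add: q_def field_simps)
      also have "\<dots> \<le> q * (m div 2 + 1)"
        by (intro mult_left_mono) (auto simp: q_def)
      finally show ?thesis
        by simp
    qed
    finally show ?thesis
      by (simp add: A_def q_def)
  qed
  have "measure_pmf.prob (random_formula n k m) {Cs. A / 2 ^ n < mu_formula n m Cs} \<le> (1/2) ^ m"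
    using assms(1,2) half_plus_power_le[OF assms(1)]
    by (intro prob_mu_formula_gt_le[OF _ _ _ _ few_close shrinking]) (auto simp: \<gamma>_def)
  then show ?thesis
    by (simp add: A_def)
qed

section \<open>Asymptotics\<close>

lemma nat_floor_bounds:
  assumes "0 \<le> x"
  shows "x - 1 < real (nat \<lfloor>x\<rfloor>)" "real (nat \<lfloor>x\<rfloor>) \<le> x"
  using assms real_of_int_floor_gt_diff_one[of x] of_nat_floor[of x] by simp_all

lemma nat_floor_log_bounds:
  fixes \<delta> x :: real
  assumes "0 \<le> \<delta>" "\<delta> \<le> 1" "4 \<le> x"
  defines "k \<equiv> nat \<lfloor>(1 + \<delta>) * log 2 x\<rfloor>"
  shows "1 \<le> k" "log 2 x - 1 \<le> k" "k \<le> 2 * log 2 x"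
proof -
  have "2 \<le> log 2 x"
    using assms(3) by (simp add: le_log_iff)
  moreover have "1 * log 2 x \<le> (1 + \<delta>) * log 2 x" "(1 + \<delta>) * log 2 x \<le> 2 * log 2 x"
    using assms(1,2) \<open>2 \<le> log 2 x\<close> by (intro mult_right_mono; simp)+
  moreover have "(1 + \<delta>) * log 2 x - 1 < k" "k \<le> (1 + \<delta>) * log 2 x"
    using nat_floor_bounds[of "(1 + \<delta>) * log 2 x"] \<open>2 \<le> log 2 x\<close> assms(1) by (simp_all add: k_def)
  ultimately show "1 \<le> k" "log 2 x - 1 \<le> k" "k \<le> 2 * log 2 x"
    by linarith+
qed

lemma nat_floor_half_plus_bounds:
  fixes \<delta> x :: real
  assumes "0 \<le> \<delta>" "\<delta> \<le> 1/2" "0 \<le> x"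
  shows "x / 2 - 1 < nat \<lfloor>(1/2 + \<delta>) * x\<rfloor>" "nat \<lfloor>(1/2 + \<delta>) * x\<rfloor> \<le> x"
proof -
  have "1/2 * x \<le> (1/2 + \<delta>) * x" "(1/2 + \<delta>) * x \<le> 1 * x"
    using assms by (intro mult_right_mono; simp)+
  moreover have "(1/2 + \<delta>) * x - 1 < nat \<lfloor>(1/2 + \<delta>) * x\<rfloor>" "nat \<lfloor>(1/2 + \<delta>) * x\<rfloor> \<le> (1/2 + \<delta>) * x"
    using nat_floor_bounds[of "(1/2 + \<delta>) * x"] assms by simp_all
  ultimately show "x / 2 - 1 < nat \<lfloor>(1/2 + \<delta>) * x\<rfloor>" "nat \<lfloor>(1/2 + \<delta>) * x\<rfloor> \<le> x"
    by linarith+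
qed

lemma prob_mu_formula_gt_exp_le_two_powr:
  fixes \<delta> :: real and N m :: nat
  defines "k \<equiv> nat \<lfloor>(1 + \<delta>) * log 2 N\<rfloor>" and "n \<equiv> nat \<lfloor>(1/2 + \<delta>) * N\<rfloor>"
  assumes \<delta>: "0 < \<delta>" "\<delta> < 1/20" and "4 \<le> real N"
    and log_small: "2 * log 2 N \<le> N / 2 - 1"
    and root_small: "N powr (1/16) + 7 + 2 * log 2 N \<le> (N / 2 - 1) / (80000 * (2 * log 2 N) ^ 2)"
    and m_large: "4 * 2 ^ k * N powr \<delta> \<le> m"
  shows "measure_pmf.prob (random_formula n k m) {Cs. exp (- (n powr \<delta>)) < mu_formula n m Cs}
           \<le> 2 powr (- 2 * real N)"
proof -
  define L where "L = log 2 N"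
  have k: "1 \<le> k" "L - 1 \<le> k" "k \<le> 2 * L"
    using nat_floor_log_bounds[of \<delta> N] \<delta> \<open>4 \<le> real N\<close> by (simp_all add: k_def L_def)
  have n: "N / 2 - 1 < n" "n \<le> N"
    using nat_floor_half_plus_bounds[of \<delta> N] \<delta> by (simp_all add: n_def)
  have "k \<le> n"
    using k n log_small unfolding L_def by linarith
  have n_powr: "n powr \<delta> \<le> N powr \<delta>"
    using n \<delta> by (intro powr_mono2) auto
  have "n powr \<delta> + 7 + k \<le> N powr (1/16) + 7 + 2 * L"
    using n_powr k powr_mono[of \<delta> "1/16" N] \<delta> \<open>4 \<le> real N\<close> by linarith
  also have "\<dots> \<le> (N / 2 - 1) / (80000 * (2 * L) ^ 2)"
    using root_small by (simp add: L_def)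
  also have "\<dots> \<le> n / (80000 * real k ^ 2)"
    using n k power_mono[of "real k" "2 * L" 2] by (intro frac_le) auto
  finally have s_small: "n powr \<delta> + 7 + k \<le> n / (80000 * real k ^ 2)" .
  have "4 * 2 ^ k * n powr \<delta> \<le> m"
    by (rule order_trans[OF mult_left_mono[OF n_powr] m_large]) simp
  then have "measure_pmf.prob (random_formula n k m) {Cs. exp (- (n powr \<delta>)) < mu_formula n m Cs} \<le> (1/2) ^ m"
    by (intro prob_mu_formula_gt_exp_le[OF k(1) \<open>k \<le> n\<close> s_small])
  also have "\<dots> \<le> (1/2) ^ (2 * N)"
  proof (rule power_decreasing)
    have "N / 2 = 2 powr (L - 1)"
      using \<open>4 \<le> real N\<close> by (simp add: L_def powr_diff)
    also have "\<dots> \<le> 2 ^ k"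
      using k by (simp add: powr_realpow[symmetric])
    finally have "N / 2 \<le> 2 ^ k" .
    moreover have "1 \<le> N powr \<delta>"
      using \<open>4 \<le> real N\<close> \<delta> by (intro ge_one_powr_ge_zero) auto
    ultimately have "4 * (N / 2) * 1 \<le> 4 * 2 ^ k * N powr \<delta>"
      by (intro mult_mono) auto
    then show "2 * N \<le> m"
      using m_large by linarith
  qed auto
  also have "\<dots> = 2 powr (- 2 * real N)"
    by (simp add: powr_minus powr_realpow[symmetric] power_divide inverse_eq_divide)
  finally show ?thesis .
qed

lemma ln_two_le: "ln (2::real) \<le> 9/10"
proof -
  have "(1 + (9/10) / real (2::nat)) ^ 2 \<le> exp (9/10::real)"
    by (rule exp_ge_one_plus_x_over_n_power_n) auto
  then have "(2::real) \<le> exp (9/10)"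
    by (simp add: power2_eq_square)
  then show ?thesis
    by (metis exp_gt_zero ln_exp ln_le_cancel_iff zero_less_numeral)
qed

text \<open>The exponent by which \<open>(1 + 2\<delta>)^k N\<close> outgrows \<open>2^k N^\<delta>\<close> when \<open>k = (1 + \<delta>) log\<^sub>2 N\<close>.\<close>

lemma growth_exponent_pos:
  fixes \<delta> :: real
  assumes "0 < \<delta>" "\<delta> < 1/20"
  shows "0 < (1 + \<delta>) * log 2 ((1 + 2 * \<delta>) / 2) + 1 - \<delta>"
proof -
  have "2 * \<delta> * ln 2 \<le> 2 * \<delta> * (9/10)"
    using ln_two_le assms by (intro mult_left_mono) auto
  also have "\<dots> \<le> 2 * \<delta> - (2 * \<delta>) ^ 2"
    using assms by (simp add: power2_eq_square)
  also have "\<dots> \<le> ln (1 + 2 * \<delta>)"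
    using ln_one_plus_pos_lower_bound[of "2 * \<delta>"] assms by simp
  also have "\<dots> < (1 + \<delta>) * ln (1 + 2 * \<delta>)"
    using assms by simp
  finally have "0 < ((1 + \<delta>) * ln (1 + 2 * \<delta>) - 2 * \<delta> * ln 2) / ln 2"
    by simp
  also have "\<dots> = (1 + \<delta>) * log 2 ((1 + 2 * \<delta>) / 2) + 1 - \<delta>"
    using assms by (simp add: log_def ln_div field_simps)
  finally show ?thesis .
qed

lemma powr_log_le_power:
  fixes r x c :: real
  assumes "0 < r" "r \<le> 1" "1 \<le> x" "real k \<le> c * log 2 x"
  shows "x powr (c * log 2 r) \<le> r ^ k"
proof -
  have "x powr (c * log 2 r) = r powr (c * log 2 x)"
    using assms by (simp add: powr_def log_def)
  also have "\<dots> \<le> r powr real k"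
    using assms by (intro powr_mono') auto
  finally show ?thesis
    using assms by (simp add: powr_realpow)
qed

lemma two_power_powr_le_growth:
  fixes \<delta> \<epsilon> x :: real
  assumes "0 \<le> \<delta>" "\<delta> \<le> 1/2" "0 < \<epsilon>" "1 \<le> x" "real k \<le> (1 + \<delta>) * log 2 x"
    and large: "8 / \<epsilon> \<le> x powr ((1 + \<delta>) * log 2 ((1 + 2 * \<delta>) / 2) + 1 - \<delta>)"
  shows "4 * 2 ^ k * x powr \<delta> \<le> \<epsilon> * (1 + 2 * \<delta>) ^ k * x / 2"
proof -
  define r where "r = (1 + 2 * \<delta>) / 2"
  define \<rho> where "\<rho> = (1 + \<delta>) * log 2 r + 1 - \<delta>"
  have "x powr \<delta> * x powr \<rho> = x powr (\<delta> + \<rho>)"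
    by (rule powr_add[symmetric])
  also have "\<delta> + \<rho> = (1 + \<delta>) * log 2 r + 1"
    by (simp add: \<rho>_def)
  also have "x powr ((1 + \<delta>) * log 2 r + 1) = x powr ((1 + \<delta>) * log 2 r) * x powr 1"
    by (rule powr_add)
  also have "\<dots> = x * x powr ((1 + \<delta>) * log 2 r)"
    using assms(4) by simp
  finally have powr_eq: "x powr \<delta> * x powr \<rho> = x * x powr ((1 + \<delta>) * log 2 r)" .
  have "4 \<le> \<epsilon> / 2 * x powr \<rho>"
    using large \<open>0 < \<epsilon>\<close> by (simp add: \<rho>_def r_def field_simps)
  then have "4 * (2 ^ k * x powr \<delta>) \<le> (\<epsilon> / 2 * x powr \<rho>) * (2 ^ k * x powr \<delta>)"
    by (rule mult_right_mono) simp
  also have "\<dots> = \<epsilon> / 2 * 2 ^ k * (x powr \<delta> * x powr \<rho>)"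
    by (simp only: mult_ac)
  also have "\<dots> = \<epsilon> / 2 * x * (2 ^ k * x powr ((1 + \<delta>) * log 2 r))"
    unfolding powr_eq by (simp only: mult_ac)
  also have "\<dots> \<le> \<epsilon> / 2 * x * (2 ^ k * r ^ k)"
    using powr_log_le_power[of r x k "1 + \<delta>"] assms by (intro mult_left_mono) (auto simp: r_def)
  also have "\<dots> = \<epsilon> * (1 + 2 * \<delta>) ^ k * x / 2"
    by (simp add: r_def power_divide)
  finally show ?thesis
    by (simp add: mult.assoc)
qed

lemma prob_mu_formula_gt_exp_smallo:
  fixes \<delta> \<epsilon> :: real and m :: "nat \<Rightarrow> nat"
  assumes \<delta>: "0 < \<delta>" "\<delta> < 1/20" and "0 < \<epsilon>"
    and m: "(\<lambda>N. real (m N)) \<sim>[sequentially] (\<lambda>N. \<epsilon> * (1 + 2 * \<delta>) ^ nat \<lfloor>(1 + \<delta>) * log 2 N\<rfloor> * N)"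
  shows "(\<lambda>N. measure_pmf.prob
            (random_formula (nat \<lfloor>(1/2 + \<delta>) * N\<rfloor>) (nat \<lfloor>(1 + \<delta>) * log 2 N\<rfloor>) (m N))
            {Cs. exp (- (real (nat \<lfloor>(1/2 + \<delta>) * N\<rfloor>) powr \<delta>)) < mu_formula (nat \<lfloor>(1/2 + \<delta>) * N\<rfloor>) (m N) Cs})
         \<in> o[sequentially](\<lambda>N. 2 powr (- real N))"
proof -
  define k where "k N = nat \<lfloor>(1 + \<delta>) * log 2 N\<rfloor>" for N :: nat
  define \<rho> where "\<rho> = (1 + \<delta>) * log 2 ((1 + 2 * \<delta>) / 2) + 1 - \<delta>"
  have "((\<lambda>N. real (m N) / (\<epsilon> * (1 + 2 * \<delta>) ^ k N * N)) \<longlongrightarrow> 1) sequentially"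
    using m \<delta> \<open>0 < \<epsilon>\<close> unfolding k_def
    by (intro asymp_equivD_strong) (auto intro!: eventually_mono[OF eventually_gt_at_top[of 0]])
  then have "\<forall>\<^sub>F N in sequentially. 1/2 < real (m N) / (\<epsilon> * (1 + 2 * \<delta>) ^ k N * N)"
    by (rule order_tendstoD) simp
  then have m_half: "\<forall>\<^sub>F N in sequentially. \<epsilon> * (1 + 2 * \<delta>) ^ k N * N / 2 \<le> m N"
    using eventually_gt_at_top[of 0]
    by eventually_elim (use \<delta> \<open>0 < \<epsilon>\<close> in \<open>simp add: field_simps\<close>)
  have "0 < \<rho>"
    unfolding \<rho>_def by (rule growth_exponent_pos[OF \<delta>])
  then have "filterlim (\<lambda>N::nat. real N powr \<rho>) at_top sequentially"
    by real_asymp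
  then have "\<forall>\<^sub>F N in sequentially. 8 / \<epsilon> \<le> real N powr \<rho>"
    by (simp add: filterlim_at_top)
  moreover have "\<forall>\<^sub>F N::nat in sequentially. 4 \<le> real N"
    "\<forall>\<^sub>F N::nat in sequentially. 2 * log 2 N \<le> N / 2 - 1"
    "\<forall>\<^sub>F N::nat in sequentially. N powr (1/16) + 7 + 2 * log 2 N \<le> (N / 2 - 1) / (80000 * (2 * log 2 N) ^ 2)"
    by real_asymp+
  ultimately have "\<forall>\<^sub>F N in sequentially.
      measure_pmf.prob (random_formula (nat \<lfloor>(1/2 + \<delta>) * N\<rfloor>) (k N) (m N))
        {Cs. exp (- (real (nat \<lfloor>(1/2 + \<delta>) * N\<rfloor>) powr \<delta>)) < mu_formula (nat \<lfloor>(1/2 + \<delta>) * N\<rfloor>) (m N) Cs}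
      \<le> 2 powr (- 2 * real N)"
    using m_half
  proof eventually_elim
    case (elim N)
    have "4 * 2 ^ k N * N powr \<delta> \<le> \<epsilon> * (1 + 2 * \<delta>) ^ k N * N / 2"
      using \<delta> \<open>0 < \<epsilon>\<close> elim(1,2) nat_floor_bounds(2)[of "(1 + \<delta>) * log 2 N"]
      by (intro two_power_powr_le_growth) (auto simp: k_def \<rho>_def)
    then show ?case
      using elim(5) unfolding k_def
      by (intro prob_mu_formula_gt_exp_le_two_powr[OF \<delta> elim(2-4)]) linarith
  qed
  then have "(\<lambda>N. measure_pmf.prob (random_formula (nat \<lfloor>(1/2 + \<delta>) * N\<rfloor>) (k N) (m N))
        {Cs. exp (- (real (nat \<lfloor>(1/2 + \<delta>) * N\<rfloor>) powr \<delta>)) < mu_formula (nat \<lfloor>(1/2 + \<delta>) * N\<rfloor>) (m N) Cs})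
      \<in> O[sequentially](\<lambda>N. 2 powr (- 2 * real N))"
    by (intro landau_o.bigI[of 1]) (auto elim!: eventually_mono)
  also have "(\<lambda>N::nat. 2 powr (- 2 * real N)) \<in> o[sequentially](\<lambda>N. 2 powr (- real N))"
    by real_asymp
  finally show ?thesis
    unfolding k_def .
qed

theorem claimA:
  "\<exists>\<delta>0::real. \<delta>0 > 0 \<and>
     (\<forall>\<delta> \<epsilon> :: real. \<forall>m :: nat \<Rightarrow> nat.
        0 < \<delta> \<longrightarrow> \<delta> < \<delta>0 \<longrightarrow> 0 < \<epsilon> \<longrightarrow> \<epsilon> < \<delta>^2 / 9 \<longrightarrow>
        (let k = (\<lambda>N::nat. nat \<lfloor>(1 + \<delta>) * log 2 (real N)\<rfloor>);
             n = (\<lambda>N::nat. nat \<lfloor>(1/2 + \<delta>) * real N\<rfloor>)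
         in ((\<lambda>N. real (m N)) \<sim>[sequentially] (\<lambda>N. \<epsilon> * (1 + 2*\<delta>) ^ k N * real N)) \<longrightarrow>
            (\<lambda>N. measure_pmf.prob (random_formula (n N) (k N) (m N))
                   {Cs. mu_formula (n N) (m N) Cs > exp (- (real (n N) powr \<delta>))})
              \<in> o[sequentially](\<lambda>N. 2 powr (- real N))))"
proof (rule exI[of _ "1/20"], intro conjI allI impI)
  fix \<delta> \<epsilon> :: real and m :: "nat \<Rightarrow> nat"
  assume "0 < \<delta>" "\<delta> < 1/20" "0 < \<epsilon>"
  then show "let k = (\<lambda>N::nat. nat \<lfloor>(1 + \<delta>) * log 2 (real N)\<rfloor>);
             n = (\<lambda>N::nat. nat \<lfloor>(1/2 + \<delta>) * real N\<rfloor>)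
         in ((\<lambda>N. real (m N)) \<sim>[sequentially] (\<lambda>N. \<epsilon> * (1 + 2*\<delta>) ^ k N * real N)) \<longrightarrow>
            (\<lambda>N. measure_pmf.prob (random_formula (n N) (k N) (m N))
                   {Cs. mu_formula (n N) (m N) Cs > exp (- (real (n N) powr \<delta>))})
              \<in> o[sequentially](\<lambda>N. 2 powr (- real N))"
    unfolding Let_def using prob_mu_formula_gt_exp_smallo by blast
qed simp

end
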